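(* Let $k$ be a field of characteristic zero and $f,g\in k[x,y,z]$. Suppose $\gcd(d(L(f)),d(L(g)))\in k[x]\setminus k$, $g$ is primitive and $g(x,0,0)=0$. Assume there exist non-negative integers $p,q$ with $(p,q)\ne(0,0)$ such that, for the grading $\deg y=p$, $\deg z=q$, the polynomial $\overline f$ is primitive and $\deg\overline f>\deg\overline g$. Then there is no $k[x]$-automorphism $\zeta$ of $k[x,y,z]$ with $\zeta(y)=u_1(v_0g+F_0(f))$ for any $u_1,v_0\in k(x)$ and $F_0\in k(x)[t]$.
   Context: Polynomials in $k[x,y,z]$ (or $k(x)[y,z]$) are regarded as polynomials in $y,z$ with coefficients in $k[x]$ (or $k(x)$). For $h\in k[x,y,z]$, $d(h)$ is the greatest common divisor in $k[x]$ of the coefficients of $h$ as a polynomial in $y,z$; $h$ is primitive if $d(h)=1$ (up to units). $L(h)$ is the sum of the terms of $h$ of total degree exactly $1$ in $y,z$. For the $\mathbb Z$-grading with $\deg y=p$, $\deg z=q$, $\overline h$ is the sum of the terms of $h$ of highest degree, and $\deg\overline h$ is that degree. *)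

theory Defs
  imports "HOL-Computational_Algebra.Computational_Algebra"
begin

text \<open>k[x,y,z] is represented as the nested polynomial type 'k poly poly poly:
  the innermost variable is x, the middle one is y, the outermost one is z.
  k(x)[y,z] is represented as ('k poly fract) poly poly (inner y, outer z).\<close>

type_synonym 'k pxyz = "'k poly poly poly"
type_synonym 'k pfyz = "'k poly fract poly poly"

definition cf :: "'k::zero pxyz \<Rightarrow> nat \<Rightarrow> nat \<Rightarrow> 'k poly" where
  "cf h i j = coeff (coeff h j) i"

definition mono :: "'k::zero poly \<Rightarrow> nat \<Rightarrow> nat \<Rightarrow> 'k pxyz" where
  "mono c i j = monom (monom c i) j"

definition dcont :: "'k::{field,field_gcd} pxyz \<Rightarrow> 'k poly" where
  "dcont h = Gcd {cf h i j | i j. True}"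

definition primitive :: "'k::{field,field_gcd} pxyz \<Rightarrow> bool" where
  "primitive h \<longleftrightarrow> is_unit (dcont h)"

definition Lin :: "'k::comm_monoid_add pxyz \<Rightarrow> 'k pxyz" where
  "Lin h = mono (cf h 1 0) 1 0 + mono (cf h 0 1) 0 1"

definition wdeg :: "nat \<Rightarrow> nat \<Rightarrow> 'k::zero pxyz \<Rightarrow> nat" where
  "wdeg p q h = Max {p * i + q * j | i j. cf h i j \<noteq> 0}"

definition top :: "nat \<Rightarrow> nat \<Rightarrow> 'k::comm_monoid_add pxyz \<Rightarrow> 'k pxyz" where
  "top p q h = (\<Sum>j\<le>degree h. \<Sum>i\<le>degree (coeff h j).
      if p * i + q * j = wdeg p q h then mono (cf h i j) i j else 0)"

definition Yv :: "'k::comm_ring_1 pxyz" where "Yv = monom (monom 1 1) 0"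
definition Zv :: "'k::comm_ring_1 pxyz" where "Zv = monom 1 1"

definition kx_automorphism :: "('k::comm_ring_1 pxyz \<Rightarrow> 'k pxyz) \<Rightarrow> bool" where
  "kx_automorphism \<zeta> \<longleftrightarrow> bij \<zeta> \<and>
     (\<forall>a b. \<zeta> (a + b) = \<zeta> a + \<zeta> b) \<and> (\<forall>a b. \<zeta> (a * b) = \<zeta> a * \<zeta> b) \<and>
     \<zeta> 1 = 1 \<and> (\<forall>c. \<zeta> [:[:c:]:] = [:[:c:]:])"

definition emb :: "'k::idom pxyz \<Rightarrow> 'k pfyz" where
  "emb h = map_poly (map_poly (\<lambda>c. Fract c 1)) h"

definition subst_t :: "'k::idom poly fract poly \<Rightarrow> 'k pfyz \<Rightarrow> 'k pfyz" where
  "subst_t F h = poly (map_poly (\<lambda>c. [:[:c:]:]) F) h"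

end

theory Submission
  imports Defs
begin

(* Clearing denominators turns zeta(y) = u1 (v0 g + F0(f)) into D zeta(y) = A g + F(f) with
   D, A in k[x] and F in k[x][t].  Let pi be a prime of k[x] dividing D.  Substituting
   y -> t^p y, z -> t^q z makes f a polynomial in t whose leading coefficient is the primitive
   top part of f, and g one of smaller t-degree.  If m > 0 is the largest index with pi not
   dividing the m-th coefficient of F, the coefficient of t^(m deg f) of A g + F(f) is not
   divisible by pi; so pi divides all non-constant coefficients of F, then the constant one
   because g(x,0,0) = 0, and then A because g is primitive.  Hence zeta(y) = a g + F(f) over
   k[x].  The elements whose linear coefficients are divisible by r = gcd(d(L f), d(L g)) form a
   k[x]-subalgebra, so r divides both linear coefficients of zeta(y).  Since zeta is onto, the
   matrix of linear coefficients of zeta(y), zeta(z) is invertible over k[x], so r is a unit. *)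

definition is_ring_hom :: "('a::comm_ring_1 \<Rightarrow> 'b::comm_ring_1) \<Rightarrow> bool" where
  "is_ring_hom \<phi> \<longleftrightarrow> \<phi> 1 = 1 \<and> (\<forall>a b. \<phi> (a + b) = \<phi> a + \<phi> b) \<and> (\<forall>a b. \<phi> (a * b) = \<phi> a * \<phi> b)"

lemma is_ring_homD:
  assumes "is_ring_hom \<phi>"
  shows ring_hom_1: "\<phi> 1 = 1" and ring_hom_add: "\<phi> (a + b) = \<phi> a + \<phi> b"
    and ring_hom_mult: "\<phi> (a * b) = \<phi> a * \<phi> b"
  using assms by (auto simp: is_ring_hom_def)

lemma ring_hom_0:
  assumes "is_ring_hom \<phi>"
  shows "\<phi> 0 = 0"
proof -
  have "\<phi> 0 + \<phi> 0 = \<phi> 0 + 0"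
    using ring_hom_add[OF assms, of 0 0] by simp
  then show ?thesis
    by (rule add_left_imp_eq)
qed

lemma ring_hom_sum: "is_ring_hom \<phi> \<Longrightarrow> \<phi> (sum f A) = (\<Sum>x\<in>A. \<phi> (f x))"
  by (induction A rule: infinite_finite_induct) (simp_all add: ring_hom_0 ring_hom_add)

lemma is_ring_hom_comp: "is_ring_hom \<phi> \<Longrightarrow> is_ring_hom \<psi> \<Longrightarrow> is_ring_hom (\<lambda>x. \<psi> (\<phi> x))"
  by (simp add: is_ring_hom_def)

lemma is_ring_hom_poly: "is_ring_hom (\<lambda>P. poly P x)"
  by (simp add: is_ring_hom_def)

lemma is_ring_hom_map_poly:
  assumes "is_ring_hom \<phi>"
  shows "is_ring_hom (map_poly \<phi>)"
  unfolding is_ring_hom_def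
proof (intro conjI allI)
  show "map_poly \<phi> 1 = 1"
    by (simp add: ring_hom_1[OF assms])
  show "map_poly \<phi> (a + b) = map_poly \<phi> a + map_poly \<phi> b" for a b
    by (intro poly_eqI) (simp add: coeff_map_poly ring_hom_0[OF assms] ring_hom_add[OF assms])
  show "map_poly \<phi> (a * b) = map_poly \<phi> a * map_poly \<phi> b" for a b
    by (intro poly_eqI) (simp add: coeff_map_poly coeff_mult ring_hom_0[OF assms]
        ring_hom_mult[OF assms] ring_hom_sum[OF assms])
qed

lemma ring_hom_poly_map_poly:
  assumes "is_ring_hom \<phi>" "\<psi> 0 = 0"
  shows "\<phi> (poly (map_poly \<psi> P) x) = poly (map_poly (\<lambda>c. \<phi> (\<psi> c)) P) (\<phi> x)"
  by (induction P) (simp_all add: map_poly_pCons assms ring_hom_0[OF assms(1)]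
      ring_hom_add[OF assms(1)] ring_hom_mult[OF assms(1)])

lemma poly_map_poly_eq_sum:
  fixes \<phi> :: "'a::zero \<Rightarrow> 'b::comm_semiring_1"
  assumes "\<phi> 0 = 0"
  shows "poly (map_poly \<phi> P) x = (\<Sum>j\<le>degree P. \<phi> (coeff P j) * x ^ j)"
proof -
  have "poly (map_poly \<phi> P) x = (\<Sum>j\<le>degree (map_poly \<phi> P). coeff (map_poly \<phi> P) j * x ^ j)"
    by (rule poly_altdef)
  also have "\<dots> = (\<Sum>j\<le>degree P. coeff (map_poly \<phi> P) j * x ^ j)"
    by (rule sum.mono_neutral_left) (auto simp: map_poly_degree_leq coeff_eq_0)
  finally show ?thesis
    by (simp add: coeff_map_poly assms)
qed

lemma pcompose_monom: "pcompose (monom c n) T = smult c (T ^ n)"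
  by (simp add: pcompose_altdef map_poly_monom poly_monom)

lemma coeff_pcompose_top:
  fixes B T :: "'a::idom poly"
  assumes "degree T > 0"
  shows "coeff (pcompose B T) (degree B * degree T) = lead_coeff B * lead_coeff T ^ degree B"
  using lead_coeff_comp[OF assms, of B] by (simp add: degree_pcompose)

lemma prime_dvd_coeff_pcompose:
  fixes G T B :: "'a::idom poly"
  assumes prime: "prime_elem \<pi>" and lead: "\<not> \<pi> dvd lead_coeff T" and deg: "degree G < degree T"
    and "[:\<pi>:] dvd smult a G + pcompose B T" and "i > 0"
  shows "\<pi> dvd coeff B i"
  using assms(4,5)
proof (induction "degree B" arbitrary: B rule: less_induct)
  case less
  define n where "n = degree B"
  define B' where "B' = B - monom (lead_coeff B) n"
  show ?case
  proof (cases "n = 0")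
    case True
    then show ?thesis
      using \<open>i > 0\<close> by (simp add: n_def coeff_eq_0)
  next
    case False
    have "coeff G (n * degree T) = 0"
      using deg False by (intro coeff_eq_0 less_le_trans[OF deg]) simp
    then have "coeff (smult a G + pcompose B T) (n * degree T) = lead_coeff B * lead_coeff T ^ n"
      using coeff_pcompose_top[of T B] deg by (simp add: n_def)
    then have "\<pi> dvd lead_coeff B * lead_coeff T ^ n"
      using less.prems(1) by (metis const_poly_dvd_iff)
    then have lead_B: "\<pi> dvd lead_coeff B"
      using prime lead by (metis prime_elem_dvd_mult_iff prime_elem_dvd_power)
    have "smult a G + pcompose B T = (smult a G + pcompose B' T) + smult (lead_coeff B) (T ^ n)"
      by (simp add: B'_def pcompose_diff pcompose_monom)
    moreover have "[:\<pi>:] dvd smult (lead_coeff B) (T ^ n)"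
      using lead_B by (simp add: const_poly_dvd_iff dvd_mult2)
    ultimately have dvd': "[:\<pi>:] dvd smult a G + pcompose B' T"
      using less.prems(1) by (metis dvd_add_left_iff)
    have coeff_B': "coeff B' k = (if k = n then 0 else coeff B k)" for k
      by (simp add: B'_def coeff_monom n_def)
    have "degree B' < degree B"
    proof -
      have "degree B' \<le> n"
        by (rule degree_le) (simp add: coeff_B' n_def coeff_eq_0)
      moreover have "degree B' \<noteq> n"
        using False coeff_B'[of n] by (metis degree_0 leading_coeff_0_iff)
      ultimately show ?thesis
        by (simp add: n_def)
    qed
    then show ?thesis
      using less.hyps[OF _ dvd' \<open>i > 0\<close>] lead_B coeff_B'[of i]
      by (cases "i = n") (simp_all add: n_def)
  qed
qed

lemma fract_poly_common_denominator:
  fixes P :: "'a::idom fract poly"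
  shows "\<exists>d Q. d \<noteq> 0 \<and> smult (to_fract d) P = fract_poly Q"
proof (induction P)
  case 0
  show ?case
    by (intro exI[of _ 1] exI[of _ 0]) simp
next
  case (pCons c P)
  then obtain d Q where "d \<noteq> 0" and Q: "smult (to_fract d) P = fract_poly Q"
    by blast
  obtain a b where c: "c = Fract a b" and "b \<noteq> 0"
    by (cases c)
  have "to_fract b * c = to_fract a"
    using \<open>b \<noteq> 0\<close> by (simp add: c to_fract_def eq_fract)
  then have "smult (to_fract (d * b)) (pCons c P) = fract_poly (pCons (a * d) (smult b Q))"
    by (simp add: map_poly_pCons Q mult_ac flip: smult_smult)
  then show ?case
    using \<open>d \<noteq> 0\<close> \<open>b \<noteq> 0\<close> by (intro exI[of _ "d * b"] exI) simp
qed

lemma cf_add [simp]: "cf (P + Q) i j = cf P i j + cf Q i j"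
  by (simp add: cf_def)

lemma cf_0 [simp]: "cf 0 i j = 0"
  by (simp add: cf_def)

lemma cf_sum: "cf (sum f A) i j = (\<Sum>x\<in>A. cf (f x) i j)"
  by (induction A rule: infinite_finite_induct) simp_all

lemma cf_const [simp]: "cf [:[:c:]:] i j = (if i = 0 \<and> j = 0 then c else 0)"
  by (simp add: cf_def coeff_pCons split: nat.splits)

lemma cf_smult_const [simp]: "cf (smult [:c:] P) i j = c * cf P i j"
  by (simp add: cf_def)

lemma cf_mono [simp]: "cf (mono c i' j') i j = (if i = i' \<and> j = j' then c else 0)"
  by (simp add: cf_def mono_def coeff_monom)

lemma cf_Yv [simp]: "cf Yv i j = (if i = 1 \<and> j = 0 then 1 else 0)"
  by (simp add: cf_def Yv_def coeff_monom)

lemma cf_Zv [simp]: "cf Zv i j = (if i = 0 \<and> j = 1 then 1 else 0)"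
  by (simp add: cf_def Zv_def coeff_monom)

lemma cf_eqI: "(\<And>i j. cf P i j = cf Q i j) \<Longrightarrow> P = Q"
  by (intro poly_eqI) (simp add: cf_def poly_eq_iff)

lemma cf_const_dvd_iff: "[:[:c:]:] dvd P \<longleftrightarrow> (\<forall>i j. c dvd cf P i j)"
  for c :: "'k::field poly"
  by (simp add: const_poly_dvd_iff cf_def) blast

lemma cf_mult_origin: "cf (P * Q) 0 0 = cf P 0 0 * cf Q 0 0"
  by (simp add: cf_def coeff_mult_0)

lemma cf_mult_y: "cf (P * Q) 1 0 = cf P 1 0 * cf Q 0 0 + cf P 0 0 * cf Q 1 0"
  by (simp add: cf_def coeff_mult_0 coeff_mult numeral_2_eq_2 algebra_simps)

lemma cf_mult_z: "cf (P * Q) 0 1 = cf P 0 1 * cf Q 0 0 + cf P 0 0 * cf Q 0 1"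
  by (simp add: cf_def coeff_mult_0 coeff_mult algebra_simps)

lemma pxyz_induct [case_names add mult const Yv Zv]:
  fixes Q :: "'k::comm_ring_1 pxyz \<Rightarrow> bool"
  assumes add: "\<And>a b. Q a \<Longrightarrow> Q b \<Longrightarrow> Q (a + b)"
    and mult: "\<And>a b. Q a \<Longrightarrow> Q b \<Longrightarrow> Q (a * b)"
    and const: "\<And>c. Q [:[:c:]:]" and Yv: "Q Yv" and Zv: "Q Zv"
  shows "Q P"
proof -
  have y_poly: "Q [:a:]" for a
  proof (induction a)
    case 0
    then show ?case using const[of 0] by simp
  next
    case (pCons c a)
    have "[:pCons c a:] = [:[:c:]:] + Yv * [:a:]"
      by (simp add: Yv_def monom_Suc monom_0)
    then show ?case using add[OF const mult[OF Yv pCons(2)]] by simp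
  qed
  show ?thesis
  proof (induction P)
    case 0
    then show ?case using y_poly[of 0] by simp
  next
    case (pCons a P)
    have "pCons a P = [:a:] + Zv * P"
      by (simp add: Zv_def monom_Suc)
    then show ?case using add[OF y_poly mult[OF Zv pCons(2)]] by simp
  qed
qed

lemma dvd_dcont_iff: "c dvd dcont P \<longleftrightarrow> (\<forall>i j. c dvd cf P i j)"
  unfolding dcont_def by (auto intro: Gcd_greatest dvd_trans[OF _ Gcd_dvd])

lemma dvd_dcont_Lin_iff: "c dvd dcont (Lin P) \<longleftrightarrow> c dvd cf P 1 0 \<and> c dvd cf P 0 1"
  by (auto simp: dvd_dcont_iff Lin_def)

lemma primitive_nonzero: "primitive P \<Longrightarrow> P \<noteq> 0"
  by (auto simp: primitive_def dcont_def)

lemma primitive_not_const_dvd: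
  assumes "primitive P" "\<not> is_unit c"
  shows "\<not> [:[:c:]:] dvd P"
  using assms dvd_unit_imp_unit[of c "dcont P"]
  by (auto simp: primitive_def cf_const_dvd_iff dvd_dcont_iff)

lemma dvd_dcont_Lin_add:
  "c dvd dcont (Lin P) \<Longrightarrow> c dvd dcont (Lin Q) \<Longrightarrow> c dvd dcont (Lin (P + Q))"
  by (simp add: dvd_dcont_Lin_iff)

lemma dvd_dcont_Lin_mult:
  "c dvd dcont (Lin P) \<Longrightarrow> c dvd dcont (Lin Q) \<Longrightarrow> c dvd dcont (Lin (P * Q))"
  unfolding dvd_dcont_Lin_iff cf_mult_y cf_mult_z by simp

lemma dvd_dcont_Lin_const: "c dvd dcont (Lin [:[:a:]:])"
  by (simp add: dvd_dcont_Lin_iff)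

lemma linear_coeffs_endomorphism:
  fixes \<zeta> :: "'k::comm_ring_1 pxyz \<Rightarrow> 'k pxyz"
  assumes hom_add: "\<And>a b. \<zeta> (a + b) = \<zeta> a + \<zeta> b"
    and hom_mult: "\<And>a b. \<zeta> (a * b) = \<zeta> a * \<zeta> b"
    and hom_const: "\<And>c. \<zeta> [:[:c:]:] = [:[:c:]:]"
  shows "\<exists>e1 e2. cf (\<zeta> P) 1 0 = e1 * cf (\<zeta> Yv) 1 0 + e2 * cf (\<zeta> Zv) 1 0 \<and>
                 cf (\<zeta> P) 0 1 = e1 * cf (\<zeta> Yv) 0 1 + e2 * cf (\<zeta> Zv) 0 1"
proof (induction P rule: pxyz_induct)
  case (add a b)
  then obtain e1 e2 e1' e2' where
    "cf (\<zeta> a) 1 0 = e1 * cf (\<zeta> Yv) 1 0 + e2 * cf (\<zeta> Zv) 1 0"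
    "cf (\<zeta> a) 0 1 = e1 * cf (\<zeta> Yv) 0 1 + e2 * cf (\<zeta> Zv) 0 1"
    "cf (\<zeta> b) 1 0 = e1' * cf (\<zeta> Yv) 1 0 + e2' * cf (\<zeta> Zv) 1 0"
    "cf (\<zeta> b) 0 1 = e1' * cf (\<zeta> Yv) 0 1 + e2' * cf (\<zeta> Zv) 0 1"
    by blast
  then show ?case
    by (intro exI[of _ "e1 + e1'"] exI[of _ "e2 + e2'"]) (simp add: assms algebra_simps)
next
  case (mult a b)
  then obtain e1 e2 e1' e2' where
    "cf (\<zeta> a) 1 0 = e1 * cf (\<zeta> Yv) 1 0 + e2 * cf (\<zeta> Zv) 1 0"
    "cf (\<zeta> a) 0 1 = e1 * cf (\<zeta> Yv) 0 1 + e2 * cf (\<zeta> Zv) 0 1"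
    "cf (\<zeta> b) 1 0 = e1' * cf (\<zeta> Yv) 1 0 + e2' * cf (\<zeta> Zv) 1 0"
    "cf (\<zeta> b) 0 1 = e1' * cf (\<zeta> Yv) 0 1 + e2' * cf (\<zeta> Zv) 0 1"
    by blast
  then show ?case
    by (intro exI[of _ "e1 * cf (\<zeta> b) 0 0 + cf (\<zeta> a) 0 0 * e1'"]
        exI[of _ "e2 * cf (\<zeta> b) 0 0 + cf (\<zeta> a) 0 0 * e2'"], unfold hom_mult cf_mult_y cf_mult_z)
      (simp add: algebra_simps)
next
  case (const c)
  show ?case by (intro exI[of _ 0]) (simp add: assms)
next
  case Yv
  show ?case by (intro exI[of _ 1] exI[of _ 0]) simp
next
  case Zv
  show ?case by (intro exI[of _ 0] exI[of _ 1]) simp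
qed

lemma primitive_Lin_automorphism:
  fixes \<zeta> :: "'k::{field,field_gcd} pxyz \<Rightarrow> 'k pxyz"
  assumes "kx_automorphism \<zeta>"
  shows "primitive (Lin (\<zeta> Yv))"
proof -
  define a1 where "a1 = cf (\<zeta> Yv) 1 0"
  define b1 where "b1 = cf (\<zeta> Yv) 0 1"
  define a2 where "a2 = cf (\<zeta> Zv) 1 0"
  define b2 where "b2 = cf (\<zeta> Zv) 0 1"
  have span: "\<exists>e1 e2. cf (\<zeta> P) 1 0 = e1 * a1 + e2 * a2 \<and> cf (\<zeta> P) 0 1 = e1 * b1 + e2 * b2" for P
    unfolding a1_def b1_def a2_def b2_def
    by (rule linear_coeffs_endomorphism) (use assms in \<open>simp_all add: kx_automorphism_def\<close>)
  obtain Py Pz where "\<zeta> Py = Yv" "\<zeta> Pz = Zv"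
    using assms by (metis bij_def kx_automorphism_def surjD)
  then obtain e1 e2 e1' e2' where
    "1 = e1 * a1 + e2 * a2" "0 = e1 * b1 + e2 * b2"
    "0 = e1' * a1 + e2' * a2" "1 = e1' * b1 + e2' * b2"
    using span[of Py] span[of Pz] by auto
  \<comment> \<open>so the matrix of linear coefficients of \<open>\<zeta> Yv\<close>, \<open>\<zeta> Zv\<close> has a left inverse over k[x]\<close>
  moreover have "(a1 * b2 - a2 * b1) * (e1 * e2' - e1' * e2) =
      (e1 * a1 + e2 * a2) * (e1' * b1 + e2' * b2) - (e1' * a1 + e2' * a2) * (e1 * b1 + e2 * b2)"
    by (simp add: algebra_simps)
  ultimately have "(a1 * b2 - a2 * b1) * (e1 * e2' - e1' * e2) = 1"
    by simp
  then have "is_unit (a1 * b2 - a2 * b1)"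
    by (metis dvd_triv_left)
  moreover have "dcont (Lin (\<zeta> Yv)) dvd a1 * b2 - a2 * b1"
    using dvd_dcont_Lin_iff[of "dcont (Lin (\<zeta> Yv))" "\<zeta> Yv"] by (simp add: a1_def b1_def)
  ultimately show ?thesis
    unfolding primitive_def by (metis dvd_unit_imp_unit)
qed

definition subst_tx :: "'k::comm_ring_1 poly poly \<Rightarrow> 'k pxyz \<Rightarrow> 'k pxyz" where
  "subst_tx F h = poly (map_poly (\<lambda>c. [:[:c:]:]) F) h"

lemma subst_tx_smult: "subst_tx (smult c F) h = [:[:c:]:] * subst_tx F h"
  by (simp add: subst_tx_def map_poly_smult)

lemma is_ring_hom_cf_origin: "is_ring_hom (\<lambda>P. cf P 0 0)"
  by (simp add: is_ring_hom_def cf_mult_origin) (simp add: cf_def)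

lemma cf_subst_tx_origin: "cf (subst_tx F h) 0 0 = poly F (cf h 0 0)"
  unfolding subst_tx_def by (simp add: ring_hom_poly_map_poly[OF is_ring_hom_cf_origin])

lemma dvd_dcont_Lin_subst_tx:
  assumes "c dvd dcont (Lin h)"
  shows "c dvd dcont (Lin (subst_tx F h))"
proof (induction F)
  case (pCons a F)
  have "subst_tx (pCons a F) h = [:[:a:]:] + h * subst_tx F h"
    by (simp add: subst_tx_def map_poly_pCons)
  then show ?case
    using pCons.IH by (simp add: dvd_dcont_Lin_add dvd_dcont_Lin_mult dvd_dcont_Lin_const assms)
qed (simp add: subst_tx_def dvd_dcont_Lin_const[of c 0, simplified])

lemma emb_altdef: "emb = map_poly (map_poly to_fract)"
  by (simp add: fun_eq_iff emb_def to_fract_def[abs_def])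

lemma is_ring_hom_emb: "is_ring_hom emb"
  unfolding emb_altdef by (intro is_ring_hom_map_poly) (simp add: is_ring_hom_def)

lemma emb_const: "emb [:[:c:]:] = [:[:to_fract c:]:]"
  by (simp add: emb_altdef map_poly_pCons)

lemma coeff_coeff_emb: "coeff (coeff (emb P) j) i = to_fract (cf P i j)"
  by (simp add: emb_altdef coeff_map_poly cf_def)

lemma emb_eq_iff [simp]: "emb P = emb Q \<longleftrightarrow> P = Q"
proof
  assume "emb P = emb Q"
  then have "to_fract (cf P i j) = to_fract (cf Q i j)" for i j
    by (metis coeff_coeff_emb)
  then show "P = Q"
    by (intro cf_eqI) simp
qed simp

lemma subst_t_smult: "subst_t (smult c F) h = [:[:c:]:] * subst_t F h"
  by (simp add: subst_t_def map_poly_smult)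

lemma emb_subst_tx: "emb (subst_tx F h) = subst_t (fract_poly F) (emb h)"
  unfolding subst_tx_def subst_t_def
  by (simp add: ring_hom_poly_map_poly[OF is_ring_hom_emb] map_poly_map_poly o_def emb_const)

lemma cf_sum_mono_if:
  "cf (\<Sum>j\<le>degree P. \<Sum>i\<le>degree (coeff P j). if R i j then mono (cf P i j) i j else 0) i0 j0 =
     (if R i0 j0 then cf P i0 j0 else 0)" (is "?lhs = ?c")
proof -
  have "?lhs = (\<Sum>j\<le>degree P. \<Sum>i\<le>degree (coeff P j). if j = j0 then if i = i0 then ?c else 0 else 0)"
    unfolding cf_sum by (intro sum.cong refl) auto
  also have "\<dots> =
      (\<Sum>j\<le>degree P. if j = j0 then \<Sum>i\<le>degree (coeff P j). if i = i0 then ?c else 0 else 0)"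
    by (intro sum.cong refl) auto
  also have "\<dots> = ?c"
    by (auto simp: cf_def coeff_eq_0)
  finally show ?thesis .
qed

lemma cf_top: "cf (top p q P) i j = (if p * i + q * j = wdeg p q P then cf P i j else 0)"
  unfolding top_def by (rule cf_sum_mono_if)

lemma finite_weights: "finite {p * i + q * j | i j. cf P i j \<noteq> 0}"
proof (rule finite_subset)
  show "{p * i + q * j | i j. cf P i j \<noteq> 0} \<subseteq>
      {..p * (\<Sum>j\<le>degree P. degree (coeff P j)) + q * degree P}"
  proof safe
    fix i j assume "cf P i j \<noteq> 0"
    then have "j \<le> degree P" "i \<le> degree (coeff P j)"
      by (auto simp: cf_def intro: le_degree)
    then have "i \<le> (\<Sum>j\<le>degree P. degree (coeff P j))"
      by (meson atMost_iff finite_atMost member_le_sum order_trans zero_le)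
    with \<open>j \<le> degree P\<close> show "p * i + q * j \<le> p * (\<Sum>j\<le>degree P. degree (coeff P j)) + q * degree P"
      by (intro add_mono mult_le_mono2)
  qed
qed simp

lemma wdeg_ge: "cf P i j \<noteq> 0 \<Longrightarrow> p * i + q * j \<le> wdeg p q P"
  unfolding wdeg_def by (rule Max_ge[OF finite_weights]) blast

lemma wdeg_attained:
  assumes "P \<noteq> 0"
  obtains i j where "cf P i j \<noteq> 0" "p * i + q * j = wdeg p q P"
proof -
  obtain i j where "cf P i j \<noteq> 0"
    using assms cf_eqI[of P 0] by auto
  then have "wdeg p q P \<in> {p * i + q * j | i j. cf P i j \<noteq> 0}"
    unfolding wdeg_def by (intro Max_in[OF finite_weights]) blast
  then obtain i' j' where "cf P i' j' \<noteq> 0" "p * i' + q * j' = wdeg p q P"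
    unfolding mem_Collect_eq by metis
  then show ?thesis
    by (rule that)
qed

lemma wdeg_top:
  assumes "P \<noteq> 0"
  shows "wdeg p q (top p q P) = wdeg p q P"
proof -
  have "{p * i + q * j | i j. cf (top p q P) i j \<noteq> 0} = {wdeg p q P}"
    using wdeg_attained[OF assms, of p q] by (auto simp: cf_top) metis
  then show ?thesis
    by (simp add: wdeg_def)
qed

lemma top_0 [simp]: "top p q 0 = 0"
  by (rule cf_eqI) (simp add: cf_top)

lemma top_eq_0_iff [simp]: "top p q P = 0 \<longleftrightarrow> P = 0"
proof
  assume "top p q P = 0"
  then show "P = 0"
    using wdeg_attained[of P p q] cf_top[of p q P] by (metis cf_0)
qed simp

text \<open>\<open>wlift p q P\<close> is \<open>P(x, t\<^sup>p y, t\<^sup>q z)\<close> as a polynomial in a new variable t over k[x,y,z];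
  its coefficient of \<open>t\<^sup>d\<close> is the part of P of weighted degree d.\<close>

definition wlift :: "nat \<Rightarrow> nat \<Rightarrow> 'k::comm_ring_1 pxyz \<Rightarrow> 'k pxyz poly" where
  "wlift p q P =
     poly (map_poly (\<lambda>a. poly (map_poly (\<lambda>c. [:[:[:c:]:]:]) a) (monom Yv p)) P) (monom Zv q)"

lemma is_ring_hom_wlift: "is_ring_hom (wlift p q)"
proof -
  have "is_ring_hom (\<lambda>c. [:[:[:c:]:]:] :: 'k::comm_ring_1 pxyz poly)"
    by (simp add: is_ring_hom_def flip: one_pCons)
  then have "is_ring_hom (\<lambda>a. poly (map_poly (\<lambda>c. [:[:[:c:]:]:]) a) (monom Yv p))"
    by (rule is_ring_hom_comp[OF is_ring_hom_map_poly is_ring_hom_poly])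
  then show ?thesis
    unfolding wlift_def[abs_def]
    by (rule is_ring_hom_comp[OF is_ring_hom_map_poly is_ring_hom_poly])
qed

lemma wlift_const: "wlift p q [:[:c:]:] = [:[:[:c:]:]:]"
  by (simp add: wlift_def map_poly_pCons)

lemma wlift_eq_sum:
  "wlift p q P = (\<Sum>j\<le>degree P. \<Sum>i\<le>degree (coeff P j). monom (mono (cf P i j) i j) (p * i + q * j))"
proof -
  have monomial:
    "smult [:[:c:]:] (monom Yv p ^ i * monom Zv q ^ j) = monom (mono c i j) (p * i + q * j)"
    for c :: "'a poly" and i j
  proof -
    have "[:[:c:]:] * Yv ^ i * Zv ^ j = mono c i j"
      by (simp add: Yv_def Zv_def mono_def monom_power mult_monom monom_0[symmetric])
    then show ?thesis
      by (simp add: monom_power mult_monom smult_monom mult.assoc mult.commute)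
  qed
  show ?thesis
    unfolding wlift_def cf_def
    by (simp add: poly_map_poly_eq_sum sum_distrib_right monomial)
qed

lemma coeff_wlift:
  "coeff (wlift p q P) d =
     (\<Sum>j\<le>degree P. \<Sum>i\<le>degree (coeff P j). if p * i + q * j = d then mono (cf P i j) i j else 0)"
  by (simp add: wlift_eq_sum coeff_sum coeff_monom)

lemma cf_coeff_wlift: "cf (coeff (wlift p q P) d) i j = (if p * i + q * j = d then cf P i j else 0)"
  unfolding coeff_wlift by (rule cf_sum_mono_if)

lemma top_eq_coeff_wlift: "top p q P = coeff (wlift p q P) (wdeg p q P)"
  by (simp add: top_def coeff_wlift)

lemma degree_wlift:
  assumes "P \<noteq> 0"
  shows "degree (wlift p q P) = wdeg p q P"
proof (rule antisym)
  show "degree (wlift p q P) \<le> wdeg p q P"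
    by (rule degree_le, intro allI impI cf_eqI) (auto simp: cf_coeff_wlift, metis leD wdeg_ge)
  show "wdeg p q P \<le> degree (wlift p q P)"
    by (rule le_degree) (simp add: top_eq_coeff_wlift[symmetric] assms)
qed

lemma lead_coeff_wlift: "P \<noteq> 0 \<Longrightarrow> lead_coeff (wlift p q P) = top p q P"
  by (simp add: degree_wlift top_eq_coeff_wlift)

lemma wlift_subst_tx:
  "wlift p q (subst_tx F h) = pcompose (map_poly (\<lambda>c. [:[:c:]:]) F) (wlift p q h)"
  unfolding subst_tx_def pcompose_altdef
  by (simp add: ring_hom_poly_map_poly[OF is_ring_hom_wlift] map_poly_map_poly o_def wlift_const)

lemma combination_smult:
  "[:[:c * a:]:] * g + subst_tx (smult c F) f = [:[:c:]:] * ([:[:a:]:] * g + subst_tx F f)"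
  by (simp only: subst_tx_smult) (simp add: distrib_left)

lemma prime_dvd_higher_coeff_combination:
  fixes f g :: "'k::{field,field_gcd} pxyz"
  assumes "g \<noteq> 0" "primitive (top p q f)" "wdeg p q (top p q f) > wdeg p q (top p q g)"
    and prime: "prime_elem \<pi>" and dvd: "[:[:\<pi>:]:] dvd [:[:A:]:] * g + subst_tx F f" and "i > 0"
  shows "\<pi> dvd coeff F i"
proof -
  have "f \<noteq> 0"
    using primitive_nonzero[OF assms(2)] by auto
  have "[:[:[:\<pi>:]:]:] dvd wlift p q ([:[:A:]:] * g + subst_tx F f)"
    using dvd by (metis dvdE dvdI ring_hom_mult[OF is_ring_hom_wlift] wlift_const)
  also have "wlift p q ([:[:A:]:] * g + subst_tx F f) =
      smult [:[:A:]:] (wlift p q g) + pcompose (map_poly (\<lambda>c. [:[:c:]:]) F) (wlift p q f)"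
    by (simp only: ring_hom_add[OF is_ring_hom_wlift] ring_hom_mult[OF is_ring_hom_wlift]
        wlift_const wlift_subst_tx) simp
  finally have lifted: "[:[:[:\<pi>:]:]:] dvd
      smult [:[:A:]:] (wlift p q g) + pcompose (map_poly (\<lambda>c. [:[:c:]:]) F) (wlift p q f)" .
  have "[:[:\<pi>:]:] dvd coeff (map_poly (\<lambda>c. [:[:c:]:]) F) i"
  proof (rule prime_dvd_coeff_pcompose[OF _ _ _ lifted \<open>i > 0\<close>])
    show "prime_elem [:[:\<pi>:]:]"
      using prime by (simp add: prime_elem_const_poly_iff)
    show "\<not> [:[:\<pi>:]:] dvd lead_coeff (wlift p q f)"
      using primitive_not_const_dvd[OF assms(2)] prime \<open>f \<noteq> 0\<close>
      by (simp add: lead_coeff_wlift prime_elem_def)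
    show "degree (wlift p q g) < degree (wlift p q f)"
      using assms(3) by (simp add: degree_wlift wdeg_top \<open>f \<noteq> 0\<close> \<open>g \<noteq> 0\<close>)
  qed
  then show ?thesis
    by (simp add: coeff_map_poly)
qed

lemma prime_dvd_combination:
  fixes f g :: "'k::{field,field_gcd} pxyz"
  assumes g: "primitive g" "cf g 0 0 = 0"
    and f: "primitive (top p q f)" "wdeg p q (top p q f) > wdeg p q (top p q g)"
    and prime: "prime_elem \<pi>" and dvd: "[:[:\<pi>:]:] dvd [:[:A:]:] * g + subst_tx F f"
  shows "\<pi> dvd A \<and> [:\<pi>:] dvd F"
proof -
  have higher: "\<pi> dvd coeff F i" if "i > 0" for i
    using prime_dvd_higher_coeff_combination[OF primitive_nonzero[OF g(1)] f prime dvd that] .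
  obtain a F' where F: "F = pCons a F'"
    by (cases F)
  have "[:\<pi>:] dvd F'"
    using higher[of "Suc _"] by (simp add: const_poly_dvd_iff F)
  then have "\<pi> dvd cf f 0 0 * poly F' (cf f 0 0)"
    by (auto elim!: dvdE)
  moreover have "\<pi> dvd cf ([:[:A:]:] * g + subst_tx F f) 0 0"
    using dvd by (simp add: cf_const_dvd_iff)
  then have "\<pi> dvd a + cf f 0 0 * poly F' (cf f 0 0)"
    by (simp add: cf_subst_tx_origin g(2) F)
  ultimately have "\<pi> dvd a"
    by (simp add: dvd_add_left_iff)
  with \<open>[:\<pi>:] dvd F'\<close> have "[:\<pi>:] dvd F"
    by (auto simp: F const_poly_dvd_iff coeff_pCons split: nat.split)
  then obtain F'' where "F = smult \<pi> F''"
    by (auto elim!: dvdE)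
  then have "[:[:\<pi>:]:] dvd subst_tx F f"
    by (simp only: subst_tx_smult dvd_triv_left)
  with dvd have "[:[:\<pi>:]:] dvd [:[:A:]:] * g"
    by (simp add: dvd_add_left_iff)
  moreover have "\<not> [:[:\<pi>:]:] dvd g"
    using primitive_not_const_dvd[OF g(1)] prime by (simp add: prime_elem_def)
  moreover have "prime_elem [:[:\<pi>:]:]"
    using prime by (simp add: prime_elem_const_poly_iff)
  ultimately have "\<pi> dvd A"
    using prime_elem_dvd_mult_iff[of "[:[:\<pi>:]:]" "[:[:A:]:]" g] by simp
  with \<open>[:\<pi>:] dvd F\<close> show ?thesis
    by blast
qed

lemma dvd_combination:
  fixes f g :: "'k::{field,field_gcd} pxyz"
  assumes g: "primitive g" "cf g 0 0 = 0"
    and f: "primitive (top p q f)" "wdeg p q (top p q f) > wdeg p q (top p q g)"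
    and "D \<noteq> 0" "[:[:D:]:] dvd [:[:A:]:] * g + subst_tx F f"
  shows "D dvd A \<and> [:D:] dvd F"
  using assms(5,6)
proof (induction D arbitrary: A F rule: prime_divisors_induct)
  case zero
  then show ?case by simp
next
  case (unit D)
  then show ?case
    by (simp add: is_unit_const_poly_iff unit_imp_dvd)
next
  case (factor \<pi> D)
  have "\<pi> \<noteq> 0" "D \<noteq> 0"
    using factor.prems(1) by auto
  have "[:[:\<pi>:]:] dvd [:[:A:]:] * g + subst_tx F f"
    using factor.prems(2) by (rule dvd_trans[rotated]) simp
  then have "\<pi> dvd A \<and> [:\<pi>:] dvd F"
    by (rule prime_dvd_combination[OF g f prime_imp_prime_elem[OF factor.hyps]])
  then obtain A' F' where A: "A = \<pi> * A'" and F': "F = [:\<pi>:] * F'"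
    by (meson dvdE)
  then have F: "F = smult \<pi> F'"
    by simp
  have "[:[:\<pi>:]:] * [:[:D:]:] dvd [:[:\<pi>:]:] * ([:[:A':]:] * g + subst_tx F' f)"
    using factor.prems(2) unfolding A F combination_smult by simp
  then have "[:[:D:]:] dvd [:[:A':]:] * g + subst_tx F' f"
    using \<open>\<pi> \<noteq> 0\<close> by (simp only: dvd_mult_cancel_left) simp
  then have "D dvd A' \<and> [:D:] dvd F'"
    using factor.IH \<open>D \<noteq> 0\<close> by blast
  moreover have "[:\<pi> * D:] = [:\<pi>:] * [:D:]"
    by simp
  ultimately show ?case
    unfolding A F' by (metis dvd_refl mult_dvd_mono)
qed

lemma fract_combination_imp_combination:
  fixes f g h :: "'k::{field,field_gcd} pxyz"
  assumes g: "primitive g" "cf g 0 0 = 0"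
    and f: "primitive (top p q f)" "wdeg p q (top p q f) > wdeg p q (top p q g)"
    and h: "emb h = [:[:u:]:] * ([:[:v:]:] * emb g + subst_t F0 (emb f))"
  obtains a F where "h = [:[:a:]:] * g + subst_tx F f"
proof -
  obtain D H where "D \<noteq> 0" and H: "smult (to_fract D) (pCons (u * v) (smult u F0)) = fract_poly H"
    using fract_poly_common_denominator by blast
  obtain A F where "H = pCons A F"
    by (cases H)
  with H have A: "to_fract D * (u * v) = to_fract A"
    and F: "smult (to_fract D * u) F0 = fract_poly F"
    by (simp_all add: map_poly_pCons)
  have "emb ([:[:D:]:] * h) = [:[:to_fract D:]:] * emb h"
    by (simp only: ring_hom_mult[OF is_ring_hom_emb] emb_const)
  also have "\<dots> = [:[:to_fract D * (u * v):]:] * emb g + subst_t (smult (to_fract D * u) F0) (emb f)"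
    by (simp add: h subst_t_smult algebra_simps)
  also have "\<dots> = emb ([:[:A:]:] * g + subst_tx F f)"
    by (simp only: A F ring_hom_add[OF is_ring_hom_emb] ring_hom_mult[OF is_ring_hom_emb] emb_const
        emb_subst_tx)
  finally have Dh: "[:[:D:]:] * h = [:[:A:]:] * g + subst_tx F f"
    by simp
  then have "D dvd A \<and> [:D:] dvd F"
    by (intro dvd_combination[OF g f \<open>D \<noteq> 0\<close>]) (metis dvd_triv_left)
  then obtain a F' where A: "A = D * a" and "F = [:D:] * F'"
    by (meson dvdE)
  then have F: "F = smult D F'"
    by simp
  have "[:[:D:]:] * h = [:[:D:]:] * ([:[:a:]:] * g + subst_tx F' f)"
    by (simp only: Dh A F combination_smult)
  then have "h = [:[:a:]:] * g + subst_tx F' f"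
    using \<open>D \<noteq> 0\<close> by (metis mult_left_cancel pCons_eq_0_iff)
  then show ?thesis
    by (rule that)
qed

lemma dvd_dcont_Lin_combination:
  "c dvd dcont (Lin g) \<Longrightarrow> c dvd dcont (Lin f) \<Longrightarrow> c dvd dcont (Lin ([:[:a:]:] * g + subst_tx F f))"
  by (intro dvd_dcont_Lin_add dvd_dcont_Lin_mult dvd_dcont_Lin_const dvd_dcont_Lin_subst_tx)

theorem proposition4p13:
  fixes f g :: "'k::{field_char_0,field_gcd} pxyz"
  assumes "degree (gcd (dcont (Lin f)) (dcont (Lin g))) > 0"
    and "primitive g"
    and "cf g 0 0 = 0"
    and "(p, q) \<noteq> ((0::nat), (0::nat))"
    and "primitive (top p q f)"
    and "wdeg p q (top p q f) > wdeg p q (top p q g)"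
  shows "\<not> (\<exists>\<zeta> (u1::'k poly fract) (v0::'k poly fract) (F0::'k poly fract poly).
            kx_automorphism \<zeta> \<and>
            emb (\<zeta> Yv) = [:[:u1:]:] * ([:[:v0:]:] * emb g + subst_t F0 (emb f)))"
proof (intro notI, elim exE conjE)
  fix \<zeta> u1 v0 F0
  assume aut: "kx_automorphism \<zeta>"
    and "emb (\<zeta> Yv) = [:[:u1:]:] * ([:[:v0:]:] * emb g + subst_t F0 (emb f))"
  then obtain a F where "\<zeta> Yv = [:[:a:]:] * g + subst_tx F f"
    using fract_combination_imp_combination assms(2,3,5,6) by metis
  define r where "r = gcd (dcont (Lin f)) (dcont (Lin g))"
  have "r dvd dcont (Lin (\<zeta> Yv))"
    unfolding \<open>\<zeta> Yv = _\<close> r_def by (intro dvd_dcont_Lin_combination) simp_all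
  then have "is_unit r"
    using primitive_Lin_automorphism[OF aut] unfolding primitive_def by (rule dvd_unit_imp_unit)
  then show False
    using assms(1) by (simp add: r_def is_unit_iff_degree)
qed

end
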